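(* Let $h:(\mathbb{R}^n,0)\to(\mathbb{R}^n,0)$ be a bi-Lipschitz homeomorphism germ such that $h$ (and hence $h^{-1}$) satisfies condition semiline-(SSP). Let $\overline{h}:S^{n-1}\to S^{n-1}$ be the induced map $\overline{h}(a)=\lim_{t\to0^+}h(ta)/\|h(ta)\|$. Then $\overline{h}$ extends to a bi-Lipschitz homeomorphism $\overline{h}:\mathbb{R}^n\to\mathbb{R}^n$, and for every set-germ $A\subset\mathbb{R}^n$ at $0$ with $0\in\overline{A}$ we have $\overline{h}(D(A))=D(h(LD(A)))=D(h(A))$. In particular $\dim D(A)=\dim D(h(A))$.
   Context: For a set-germ $A\subset\mathbb{R}^n$ at $0$ with $0\in\overline A$, the direction set is $D(A)=\{a\in S^{n-1}:\exists\, x_i\in A\setminus\{0\},\ x_i\to0,\ x_i/\|x_i\|\to a\}$, and $LD(A)=\{ta: a\in D(A),\ t\ge0\}$ is its real tangent cone. A semiline is a set $\{ta:t\ge0\}$ with $a\in S^{n-1}$. A homeomorphism germ $h$ satisfies condition semiline-(SSP) if for every semiline $\ell$, $D(h(\ell))$ is a single point; under this hypothesis the limit defining $\overline h(a)$ exists and equals the unique element of $D(h(\{ta:t\ge0\}))$. A bi-Lipschitz homeomorphism germ is a homeomorphism germ $h$ with $h(0)=0$ and constants $0<K_1\le K_2$ with $K_1\|x-y\|\le\|h(x)-h(y)\|\le K_2\|x-y\|$ near $0$. *)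

theory Defs
  imports "HOL-Analysis.Analysis"
begin

definition dirset :: "(real ^ 'n) set \<Rightarrow> (real ^ 'n) set" where
  "dirset A = {a. norm a = 1 \<and> (\<exists>x :: nat \<Rightarrow> real ^ 'n.
      (\<forall>i. x i \<in> A - {0}) \<and> x \<longlonglongrightarrow> 0 \<and> (\<lambda>i. x i /\<^sub>R norm (x i)) \<longlonglongrightarrow> a)}"

definition LD :: "(real ^ 'n) set \<Rightarrow> (real ^ 'n) set" where
  "LD A = {t *\<^sub>R a | t a. a \<in> dirset A \<and> t \<ge> 0}"

definition semiline :: "real ^ 'n \<Rightarrow> (real ^ 'n) set" where
  "semiline a = {t *\<^sub>R a | t. t \<ge> 0}"

definition bilipschitz_on :: "(real ^ 'n) set \<Rightarrow> real \<Rightarrow> real \<Rightarrow> (real ^ 'n \<Rightarrow> real ^ 'n) \<Rightarrow> bool" where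
  "bilipschitz_on S K1 K2 h \<longleftrightarrow> 0 < K1 \<and> K1 \<le> K2 \<and>
     (\<forall>x\<in>S. \<forall>y\<in>S. K1 * norm (x - y) \<le> norm (h x - h y) \<and> norm (h x - h y) \<le> K2 * norm (x - y))"

definition semiline_SSP :: "(real ^ 'n) set \<Rightarrow> (real ^ 'n \<Rightarrow> real ^ 'n) \<Rightarrow> bool" where
  "semiline_SSP U h \<longleftrightarrow>
     (\<forall>a. norm a = 1 \<longrightarrow> (\<exists>b. dirset (h ` (semiline a \<inter> U)) = {b}))"

definition hbar :: "(real ^ 'n \<Rightarrow> real ^ 'n) \<Rightarrow> real ^ 'n \<Rightarrow> real ^ 'n" where
  "hbar h a = Lim (at_right 0) (\<lambda>t. h (t *\<^sub>R a) /\<^sub>R norm (h (t *\<^sub>R a)))"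

end

theory Submission
  imports Defs
begin

text \<open>If \<open>x\<^sub>i \<rightarrow> 0\<close> with directions tending to \<open>a\<close>, the bi-Lipschitz bounds keep
  \<open>h x\<^sub>i / \<parallel>h x\<^sub>i\<parallel>\<close> within \<open>2 K\<^sub>2 / K\<^sub>1 \<cdot> \<parallel>x\<^sub>i / \<parallel>x\<^sub>i\<parallel> - a\<parallel>\<close> of the normalised image of
  \<open>\<parallel>x\<^sub>i\<parallel> a\<close>, which tends to \<open>hbar a\<close> by semiline-(SSP). Hence \<open>D(h(A)) = hbar(D(A))\<close>, and
  \<open>D(LD(A)) = D(A)\<close> holds for every set. Comparing the rays through \<open>a\<close> and \<open>b\<close> at the same
  parameter shows that \<open>hbar\<close> is Lipschitz on the sphere. For the reverse bound, compare
  \<open>t b\<close> with the point \<open>s a\<close> where \<open>\<parallel>h(s a)\<parallel> = \<parallel>h(t b)\<parallel>\<close> (intermediate value theorem):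
  \<open>K\<^sub>1 t \<parallel>a - b\<parallel> / 2 \<le> K\<^sub>1 \<parallel>s a - t b\<parallel> \<le> \<parallel>h(s a) - h(t b)\<parallel>\<close>, and the right-hand side is at most
  \<open>K\<^sub>2 t\<close> times the distance of the normalised images. The radial extension
  \<open>x \<mapsto> \<parallel>x\<parallel> hbar(x / \<parallel>x\<parallel>)\<close> is therefore bi-Lipschitz; its range is open by invariance of
  domain and closed because the map is bounded below, so it is a homeomorphism of \<open>\<real>\<^sup>n\<close>.\<close>

lemma norm_normalize_diff_le:
  fixes u v :: "'a::real_normed_vector"
  assumes "v \<noteq> 0"
  shows "norm (u /\<^sub>R norm u - v /\<^sub>R norm v) \<le> 2 * norm (u - v) / norm v"
proof (cases "u = 0")
  case True
  then show ?thesis using assms by simp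
next
  case False
  have eq: "u /\<^sub>R norm u - v /\<^sub>R norm v = (u - v) /\<^sub>R norm v + (1 / norm u - 1 / norm v) *\<^sub>R u"
    using False assms by (simp add: algebra_simps divide_inverse)
  have "norm ((1 / norm u - 1 / norm v) *\<^sub>R u) = \<bar>norm v - norm u\<bar> / norm v"
    using False assms by (simp add: field_simps abs_mult)
  also have "\<dots> \<le> norm (u - v) / norm v"
    using assms by (intro divide_right_mono) (auto simp: norm_triangle_ineq3 abs_minus_commute)
  finally have "norm ((1 / norm u - 1 / norm v) *\<^sub>R u) \<le> norm (u - v) / norm v" .
  moreover have "norm ((u - v) /\<^sub>R norm v) = norm (u - v) / norm v"
    using assms by (simp add: divide_simps)
  ultimately show ?thesis
    unfolding eq using norm_triangle_ineq[of "(u - v) /\<^sub>R norm v" "(1 / norm u - 1 / norm v) *\<^sub>R u"]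
    by linarith
qed

lemma norm_scaleR_diff_le:
  fixes a b :: "'a::real_normed_vector"
  assumes "norm a = 1" "0 \<le> s"
  shows "norm (r *\<^sub>R a - s *\<^sub>R b) \<le> \<bar>r - s\<bar> + s * norm (a - b)"
proof -
  have "r *\<^sub>R a - s *\<^sub>R b = (r - s) *\<^sub>R a + s *\<^sub>R (a - b)"
    by (simp add: algebra_simps)
  then show ?thesis
    using norm_triangle_ineq[of "(r - s) *\<^sub>R a" "s *\<^sub>R (a - b)"] assms by simp
qed

lemma scaleR_norm_diff_le_twice:
  fixes a b :: "'a::real_normed_vector"
  assumes "norm a = 1" "norm b = 1" "0 \<le> r" "0 \<le> s"
  shows "s * norm (a - b) \<le> 2 * norm (r *\<^sub>R a - s *\<^sub>R b)"
proof -
  have eq: "(s - r) *\<^sub>R a + (r *\<^sub>R a - s *\<^sub>R b) = s *\<^sub>R (a - b)"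
    by (simp add: algebra_simps)
  have "s * norm (a - b) = norm ((s - r) *\<^sub>R a + (r *\<^sub>R a - s *\<^sub>R b))"
    unfolding eq using assms by simp
  also have "\<dots> \<le> \<bar>s - r\<bar> + norm (r *\<^sub>R a - s *\<^sub>R b)"
    using norm_triangle_ineq[of "(s - r) *\<^sub>R a" "r *\<^sub>R a - s *\<^sub>R b"] assms by simp
  finally show ?thesis
    using norm_triangle_ineq3[of "r *\<^sub>R a" "s *\<^sub>R b"] assms by (simp add: abs_minus_commute)
qed

lemma polar_diff_bounds:
  fixes a b :: "'a::real_normed_vector" and p q :: "'b::real_normed_vector"
  assumes ab: "norm a = 1" "norm b = 1" and pq: "norm p = 1" "norm q = 1"
    and rs: "0 \<le> r" "0 \<le> s"
    and upper: "norm (p - q) \<le> L * norm (a - b)" and lower: "c * norm (a - b) \<le> norm (p - q)"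
    and L: "0 \<le> L" and c: "0 < c"
  shows "norm (r *\<^sub>R p - s *\<^sub>R q) \<le> (1 + 2 * L) * norm (r *\<^sub>R a - s *\<^sub>R b)"
    and "c * norm (r *\<^sub>R a - s *\<^sub>R b) \<le> (c + 2) * norm (r *\<^sub>R p - s *\<^sub>R q)"
proof -
  have radial: "\<bar>r - s\<bar> \<le> norm (r *\<^sub>R a - s *\<^sub>R b)" "\<bar>r - s\<bar> \<le> norm (r *\<^sub>R p - s *\<^sub>R q)"
    using norm_triangle_ineq3[of "r *\<^sub>R a" "s *\<^sub>R b"] norm_triangle_ineq3[of "r *\<^sub>R p" "s *\<^sub>R q"] ab pq rs
    by simp_all
  have angular: "s * norm (a - b) \<le> 2 * norm (r *\<^sub>R a - s *\<^sub>R b)"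
    "s * norm (p - q) \<le> 2 * norm (r *\<^sub>R p - s *\<^sub>R q)"
    using scaleR_norm_diff_le_twice[OF ab rs] scaleR_norm_diff_le_twice[OF pq rs] by simp_all
  have "norm (r *\<^sub>R p - s *\<^sub>R q) \<le> \<bar>r - s\<bar> + s * norm (p - q)"
    by (rule norm_scaleR_diff_le[OF pq(1) rs(2)])
  also have "\<dots> \<le> norm (r *\<^sub>R a - s *\<^sub>R b) + L * (s * norm (a - b))"
    using radial(1) mult_left_mono[OF upper rs(2)] by (simp add: ac_simps)
  also have "\<dots> \<le> norm (r *\<^sub>R a - s *\<^sub>R b) + L * (2 * norm (r *\<^sub>R a - s *\<^sub>R b))"
    using angular(1) L by (simp add: mult_left_mono)
  finally show "norm (r *\<^sub>R p - s *\<^sub>R q) \<le> (1 + 2 * L) * norm (r *\<^sub>R a - s *\<^sub>R b)"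
    by (simp add: algebra_simps)
  have "c * norm (r *\<^sub>R a - s *\<^sub>R b) \<le> c * (\<bar>r - s\<bar> + s * norm (a - b))"
    using norm_scaleR_diff_le[OF ab(1) rs(2)] c by simp
  also have "\<dots> \<le> c * norm (r *\<^sub>R p - s *\<^sub>R q) + s * norm (p - q)"
  proof -
    have "c * \<bar>r - s\<bar> \<le> c * norm (r *\<^sub>R p - s *\<^sub>R q)"
      using radial(2) c by simp
    moreover have "c * (s * norm (a - b)) \<le> s * norm (p - q)"
      using mult_left_mono[OF lower rs(2)] by (simp add: ac_simps)
    ultimately show ?thesis
      unfolding distrib_left by linarith
  qed
  also have "\<dots> \<le> (c + 2) * norm (r *\<^sub>R p - s *\<^sub>R q)"
    using angular(2) by (simp add: algebra_simps)
  finally show "c * norm (r *\<^sub>R a - s *\<^sub>R b) \<le> (c + 2) * norm (r *\<^sub>R p - s *\<^sub>R q)" .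
qed

section \<open>Radial extensions\<close>

definition radial_extension :: "('a::real_normed_vector \<Rightarrow> 'b::real_normed_vector) \<Rightarrow> 'a \<Rightarrow> 'b" where
  "radial_extension \<phi> x = norm x *\<^sub>R \<phi> (x /\<^sub>R norm x)"

lemma radial_extension_unit: "norm a = 1 \<Longrightarrow> radial_extension \<phi> a = \<phi> a"
  by (simp add: radial_extension_def)

lemma radial_extension_bounds:
  fixes \<phi> :: "'a::real_normed_vector \<Rightarrow> 'b::real_normed_vector"
  assumes unit: "\<And>a. norm a = 1 \<Longrightarrow> norm (\<phi> a) = 1"
    and upper: "\<And>a b. norm a = 1 \<Longrightarrow> norm b = 1 \<Longrightarrow> norm (\<phi> a - \<phi> b) \<le> L * norm (a - b)"
    and lower: "\<And>a b. norm a = 1 \<Longrightarrow> norm b = 1 \<Longrightarrow> c * norm (a - b) \<le> norm (\<phi> a - \<phi> b)"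
    and L: "0 \<le> L" and c: "0 < c"
  shows "norm (radial_extension \<phi> x - radial_extension \<phi> y) \<le> (1 + 2 * L) * norm (x - y)"
    and "c * norm (x - y) \<le> (c + 2) * norm (radial_extension \<phi> x - radial_extension \<phi> y)"
proof -
  let ?H = "radial_extension \<phi>"
  have "norm (?H x - ?H y) \<le> (1 + 2 * L) * norm (x - y) \<and>
        c * norm (x - y) \<le> (c + 2) * norm (?H x - ?H y)"
  proof (cases "x = 0 \<or> y = 0")
    case True
    have "norm (?H z) = norm z" for z
      using unit[of "z /\<^sub>R norm z"] by (cases "z = 0") (auto simp: radial_extension_def)
    with True have "norm (?H x - ?H y) = norm (x - y)"
      by (auto simp: radial_extension_def norm_minus_commute)
    then show ?thesis
      using L c by (simp add: distrib_right)
  next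
    case False
    define a b where "a = x /\<^sub>R norm x" and "b = y /\<^sub>R norm y"
    have ab: "norm a = 1" "norm b = 1"
      using False by (auto simp: a_def b_def)
    have "x - y = norm x *\<^sub>R a - norm y *\<^sub>R b"
      using False by (simp add: a_def b_def)
    moreover have "?H x - ?H y = norm x *\<^sub>R \<phi> a - norm y *\<^sub>R \<phi> b"
      by (simp add: radial_extension_def a_def b_def)
    ultimately show ?thesis
      using polar_diff_bounds[OF ab unit[OF ab(1)] unit[OF ab(2)] norm_ge_zero[of x] norm_ge_zero[of y]
          upper[OF ab] lower[OF ab] L c]
      by simp
  qed
  then show "norm (?H x - ?H y) \<le> (1 + 2 * L) * norm (x - y)"
    and "c * norm (x - y) \<le> (c + 2) * norm (?H x - ?H y)"
    by auto
qed

lemma closed_range_if_norm_diff_bounded_below: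
  fixes f :: "'a::banach \<Rightarrow> 'b::real_normed_vector"
  assumes cont: "continuous_on UNIV f" and c: "0 < c"
    and lower: "\<And>x y. c * norm (x - y) \<le> norm (f x - f y)"
  shows "closed (range f)"
  unfolding closed_sequential_limits
proof (intro allI impI)
  fix y l assume "(\<forall>n. y n \<in> range f) \<and> y \<longlonglongrightarrow> l"
  then have "\<forall>n. \<exists>x. y n = f x" and y: "y \<longlonglongrightarrow> l"
    by auto
  from choice[OF this(1)] obtain x where x: "\<And>n. y n = f (x n)"
    by blast
  have "Cauchy x"
  proof (rule CauchyI)
    fix e :: real assume "0 < e"
    with c have "0 < c * e" by simp
    from CauchyD[OF LIMSEQ_imp_Cauchy[OF y] this]
    obtain N where N: "\<forall>m\<ge>N. \<forall>n\<ge>N. norm (y m - y n) < c * e"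
      by blast
    show "\<exists>N. \<forall>m\<ge>N. \<forall>n\<ge>N. norm (x m - x n) < e"
    proof (intro exI allI impI)
      fix m n assume "m \<ge> N" "n \<ge> N"
      have "c * norm (x m - x n) \<le> norm (y m - y n)"
        using lower[of "x m" "x n"] by (simp add: x)
      also have "\<dots> < c * e"
        using N \<open>m \<ge> N\<close> \<open>n \<ge> N\<close> by blast
      finally show "norm (x m - x n) < e"
        using c by simp
    qed
  qed
  then obtain p where "x \<longlonglongrightarrow> p"
    using Cauchy_convergent_iff convergent_def by blast
  then have "(\<lambda>n. f (x n)) \<longlonglongrightarrow> f p"
    by (rule continuous_on_tendsto_compose[OF cont]) simp_all
  then have "y \<longlonglongrightarrow> f p"
    by (simp add: x[symmetric])
  then show "l \<in> range f"
    using y LIMSEQ_unique by blast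
qed

lemma homeomorphism_UNIV_if_norm_diff_bounded_below:
  fixes f :: "'a::euclidean_space \<Rightarrow> 'a"
  assumes cont: "continuous_on UNIV f" and "0 < c"
    and lower: "\<And>x y. c * norm (x - y) \<le> norm (f x - f y)"
  obtains g where "homeomorphism UNIV UNIV f g"
proof -
  have inj: "inj f"
  proof (rule injI)
    fix x y assume "f x = f y"
    then show "x = y" using lower[of x y] \<open>0 < c\<close> by (simp add: mult_le_0_iff)
  qed
  have "open (range f)"
    using invariance_of_domain[OF cont open_UNIV inj] .
  moreover have "closed (range f)"
    using closed_range_if_norm_diff_bounded_below[OF assms] .
  ultimately have "range f = UNIV"
    using clopen[of "range f"] by auto
  moreover obtain g where "homeomorphism UNIV (range f) f g"
    using invariance_of_domain_homeomorphism[OF open_UNIV cont _ inj] by auto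
  ultimately show thesis using that by simp
qed

lemma radial_extension_bilipschitz:
  fixes \<phi> :: "real ^ 'n \<Rightarrow> real ^ 'n"
  assumes unit: "\<And>a. norm a = 1 \<Longrightarrow> norm (\<phi> a) = 1"
    and upper: "\<And>a b. norm a = 1 \<Longrightarrow> norm b = 1 \<Longrightarrow> norm (\<phi> a - \<phi> b) \<le> L * norm (a - b)"
    and lower: "\<And>a b. norm a = 1 \<Longrightarrow> norm b = 1 \<Longrightarrow> c * norm (a - b) \<le> norm (\<phi> a - \<phi> b)"
    and L: "0 \<le> L" and c: "0 < c"
  shows "bilipschitz_on UNIV (c / (c + 2)) (1 + 2 * L) (radial_extension \<phi>)"
  unfolding bilipschitz_on_def
proof (intro conjI ballI)
  let ?H = "radial_extension \<phi>"
  note bounds = radial_extension_bounds[OF unit upper lower L c]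
  show "0 < c / (c + 2)"
    using c by simp
  have "c / (c + 2) \<le> 1"
    using c by simp
  then show "c / (c + 2) \<le> 1 + 2 * L"
    using L by linarith
  fix x y :: "real ^ 'n"
  have "c / (c + 2) * norm (x - y) = c * norm (x - y) / (c + 2)"
    by (rule times_divide_eq_left)
  also have "\<dots> \<le> norm (?H x - ?H y)"
  proof (rule pos_divide_le_eq[THEN iffD2])
    show "0 < c + 2"
      using c by simp
    show "c * norm (x - y) \<le> norm (?H x - ?H y) * (c + 2)"
      unfolding mult.commute[of "norm (?H x - ?H y)"] by (rule bounds(2))
  qed
  finally show "c / (c + 2) * norm (x - y) \<le> norm (?H x - ?H y)" .
  show "norm (?H x - ?H y) \<le> (1 + 2 * L) * norm (x - y)"
    by (rule bounds(1))
qed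

lemma homeomorphism_UNIV_if_bilipschitz:
  fixes f :: "real ^ 'n \<Rightarrow> real ^ 'n"
  assumes "bilipschitz_on UNIV L1 L2 f"
  obtains g where "homeomorphism UNIV UNIV f g"
proof -
  have L: "0 < L1" "L1 \<le> L2" and bounds: "\<And>x y. L1 * norm (x - y) \<le> norm (f x - f y)"
      "\<And>x y. norm (f x - f y) \<le> L2 * norm (x - y)"
    using assms unfolding bilipschitz_on_def by auto
  have "lipschitz_on L2 UNIV f"
    using bounds(2) L by (intro lipschitz_onI) (simp_all add: dist_norm)
  then have "continuous_on UNIV f"
    by (rule lipschitz_on_continuous_on)
  then show thesis
    using homeomorphism_UNIV_if_norm_diff_bounded_below[OF _ L(1) bounds(1)] that by blast
qed

lemma tendsto_if_compact_unique_subseq_limit: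
  fixes X :: "nat \<Rightarrow> 'a::metric_space"
  assumes "compact K" "\<And>n. X n \<in> K"
    and unique: "\<And>r c. strict_mono r \<Longrightarrow> (X \<circ> r) \<longlonglongrightarrow> c \<Longrightarrow> c = b"
  shows "X \<longlonglongrightarrow> b"
proof (rule ccontr)
  assume "\<not> X \<longlonglongrightarrow> b"
  then obtain e where e: "0 < e" "\<not> eventually (\<lambda>n. dist (X n) b < e) sequentially"
    unfolding tendsto_iff by blast
  from not_eventually_sequentiallyD[OF e(2)]
  obtain r :: "nat \<Rightarrow> nat" where r: "strict_mono r" "\<forall>n. \<not> dist (X (r n)) b < e"
    by blast
  have "\<forall>n. (X \<circ> r) n \<in> K"
    using assms(2) by simp
  with compact_imp_seq_compact[OF assms(1)]
  obtain c and s :: "nat \<Rightarrow> nat" where s: "strict_mono s" "(X \<circ> r \<circ> s) \<longlonglongrightarrow> c"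
    by (rule seq_compactE)
  have "c = b"
    using unique[OF strict_mono_o[OF r(1) s(1)]] s(2) by (simp add: o_assoc)
  moreover have "(\<lambda>n. dist ((X \<circ> r \<circ> s) n) b) \<longlonglongrightarrow> dist c b"
    using s(2) by (intro tendsto_dist tendsto_const)
  then have "e \<le> dist c b"
    using r(2) by (intro tendsto_lowerbound) (auto simp: not_less)
  ultimately show False
    using e(1) by simp
qed

lemma filterlim_at_right_0_if_squeezed:
  fixes S g :: "real \<Rightarrow> real"
  assumes "\<forall>\<^sub>F t in at_right 0. 0 < S t \<and> S t \<le> g t" and "(g \<longlongrightarrow> 0) (at_right 0)"
  shows "filterlim S (at_right 0) (at_right 0)"
proof (rule tendsto_imp_filterlim_at_right)
  show "(S \<longlongrightarrow> 0) (at_right 0)"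
  proof (rule tendsto_sandwich[OF _ _ tendsto_const assms(2)])
    show "\<forall>\<^sub>F t in at_right 0. 0 \<le> S t"
      using assms(1) by (rule eventually_mono) simp
    show "\<forall>\<^sub>F t in at_right 0. S t \<le> g t"
      using assms(1) by (rule eventually_mono) simp
  qed
  show "\<forall>\<^sub>F t in at_right 0. 0 < S t"
    using assms(1) by (rule eventually_mono) simp
qed

lemma norm_eq_1_if_tendsto_normalized:
  fixes x :: "nat \<Rightarrow> 'a::real_normed_vector"
  assumes "\<And>i. x i \<noteq> 0" "(\<lambda>i. x i /\<^sub>R norm (x i)) \<longlonglongrightarrow> a"
  shows "norm a = 1"
proof -
  have "(\<lambda>i. norm (x i /\<^sub>R norm (x i))) \<longlonglongrightarrow> norm a"
    using assms(2) by (rule tendsto_norm)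
  then show ?thesis
    using assms(1) by (simp add: LIMSEQ_const_iff)
qed

section \<open>Direction sets\<close>

lemma dirsetI:
  assumes "\<And>i. x i \<in> A - {0}" "x \<longlonglongrightarrow> 0" "(\<lambda>i. x i /\<^sub>R norm (x i)) \<longlonglongrightarrow> a"
  shows "a \<in> dirset A"
  using assms norm_eq_1_if_tendsto_normalized[of x a] unfolding dirset_def by blast

lemma dirsetE:
  assumes "a \<in> dirset A"
  obtains x where "\<And>i. x i \<in> A - {0}" "x \<longlonglongrightarrow> 0" "(\<lambda>i. x i /\<^sub>R norm (x i)) \<longlonglongrightarrow> a"
  using assms unfolding dirset_def by auto

lemma norm_dirset: "a \<in> dirset A \<Longrightarrow> norm a = 1"
  by (simp add: dirset_def)

lemma mem_dirset_iff:
  "a \<in> dirset A \<longleftrightarrow>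
     norm a = 1 \<and> (\<forall>e>0. \<exists>x\<in>A - {0}. norm x < e \<and> norm (x /\<^sub>R norm x - a) < e)"
proof (intro iffI conjI allI impI)
  assume "a \<in> dirset A"
  then show "norm a = 1" by (rule norm_dirset)
  fix e :: real assume "0 < e"
  obtain x where x: "\<And>i. x i \<in> A - {0}" "x \<longlonglongrightarrow> 0" "(\<lambda>i. x i /\<^sub>R norm (x i)) \<longlonglongrightarrow> a"
    using \<open>a \<in> dirset A\<close> by (metis dirsetE)
  have "\<forall>\<^sub>F i in sequentially. norm (x i) < e"
    using order_tendstoD(2)[OF tendsto_norm_zero[OF x(2)] \<open>0 < e\<close>] .
  moreover have "\<forall>\<^sub>F i in sequentially. norm (x i /\<^sub>R norm (x i) - a) < e"
    using x(3) \<open>0 < e\<close> unfolding tendsto_iff dist_norm by blast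
  ultimately have "\<forall>\<^sub>F i in sequentially. norm (x i) < e \<and> norm (x i /\<^sub>R norm (x i) - a) < e"
    by (rule eventually_conj)
  then obtain i where "norm (x i) < e" "norm (x i /\<^sub>R norm (x i) - a) < e"
    using eventually_happens'[OF sequentially_bot] by blast
  then show "\<exists>x\<in>A - {0}. norm x < e \<and> norm (x /\<^sub>R norm x - a) < e"
    using x(1) by blast
next
  assume a: "norm a = 1 \<and> (\<forall>e>0. \<exists>x\<in>A - {0}. norm x < e \<and> norm (x /\<^sub>R norm x - a) < e)"
  have "\<forall>i. \<exists>z. z \<in> A - {0} \<and> norm z < 1 / Suc i \<and> norm (z /\<^sub>R norm z - a) < 1 / Suc i"
  proof
    fix i
    show "\<exists>z. z \<in> A - {0} \<and> norm z < 1 / Suc i \<and> norm (z /\<^sub>R norm z - a) < 1 / Suc i"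
      using a[THEN conjunct2, rule_format, of "1 / Suc i"] by auto
  qed
  from choice[OF this] obtain x where x: "\<forall>i. x i \<in> A - {0} \<and> norm (x i) < 1 / Suc i \<and>
      norm (x i /\<^sub>R norm (x i) - a) < 1 / Suc i"
    by blast
  have null: "(\<lambda>i. 1 / real (Suc i)) \<longlonglongrightarrow> 0"
    by (rule LIMSEQ_Suc[OF lim_const_over_n])
  have "x \<longlonglongrightarrow> 0"
    by (rule Lim_null_comparison[OF _ null]) (use x in \<open>simp add: less_imp_le\<close>)
  moreover have "(\<lambda>i. x i /\<^sub>R norm (x i) - a) \<longlonglongrightarrow> 0"
    by (rule Lim_null_comparison[OF _ null]) (use x in \<open>simp add: less_imp_le\<close>)
  then have "(\<lambda>i. x i /\<^sub>R norm (x i)) \<longlonglongrightarrow> a"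
    by (simp add: LIM_zero_cancel)
  ultimately show "a \<in> dirset A"
    using x by (intro dirsetI) auto
qed

lemma dirset_LD_subset: "dirset (LD A) \<subseteq> dirset A"
proof
  fix a assume "a \<in> dirset (LD A)"
  then have a: "norm a = 1" "\<And>e. 0 < e \<Longrightarrow> \<exists>x\<in>LD A - {0}. norm x < e \<and> norm (x /\<^sub>R norm x - a) < e"
    unfolding mem_dirset_iff by auto
  show "a \<in> dirset A"
    unfolding mem_dirset_iff
  proof (intro conjI allI impI)
    fix e :: real assume "0 < e"
    then obtain x where x: "x \<in> LD A - {0}" "norm (x /\<^sub>R norm x - a) < e / 2"
      using a(2)[of "e / 2"] by auto
    then obtain t c where tc: "x = t *\<^sub>R c" "c \<in> dirset A" "0 \<le> t"
      unfolding LD_def by blast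
    then have "x /\<^sub>R norm x = c"
      using x(1) norm_dirset[OF tc(2)] by auto
    then have ca: "norm (c - a) < e / 2"
      using x(2) by simp
    have "\<exists>z\<in>A - {0}. norm z < e / 2 \<and> norm (z /\<^sub>R norm z - c) < e / 2"
      using tc(2) half_gt_zero[OF \<open>0 < e\<close>] unfolding mem_dirset_iff by blast
    then obtain z where z: "z \<in> A - {0}" "norm z < e / 2" "norm (z /\<^sub>R norm z - c) < e / 2"
      by blast
    have "norm (z /\<^sub>R norm z - a) \<le> norm (z /\<^sub>R norm z - c) + norm (c - a)"
      using norm_triangle_ineq[of "z /\<^sub>R norm z - c" "c - a"] by simp
    then have "norm z < e" "norm (z /\<^sub>R norm z - a) < e"
      using z(2,3) ca \<open>0 < e\<close> by linarith+
    then show "\<exists>z\<in>A - {0}. norm z < e \<and> norm (z /\<^sub>R norm z - a) < e"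
      using z(1) by blast
  qed (use a in simp)
qed

lemma dirset_subset_dirset_LD: "dirset A \<subseteq> dirset (LD A)"
proof
  fix a assume a: "a \<in> dirset A"
  show "a \<in> dirset (LD A)"
  proof (rule dirsetI)
    show "(1 / Suc i) *\<^sub>R a \<in> LD A - {0}" for i
    proof
      show "(1 / Suc i) *\<^sub>R a \<in> LD A"
        unfolding LD_def using a by (intro CollectI exI[of _ "1 / Suc i"] exI[of _ a]) simp
      show "(1 / Suc i) *\<^sub>R a \<notin> {0}"
        using norm_dirset[OF a] by auto
    qed
    show "(\<lambda>i. (1 / Suc i) *\<^sub>R a) \<longlonglongrightarrow> 0"
      using tendsto_scaleR[OF LIMSEQ_Suc[OF lim_const_over_n] tendsto_const] by simp
    show "(\<lambda>i. (1 / Suc i) *\<^sub>R a /\<^sub>R norm ((1 / Suc i) *\<^sub>R a)) \<longlonglongrightarrow> a"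
      using norm_dirset[OF a] by simp
  qed
qed

lemma dirset_LD: "dirset (LD A) = dirset A"
  using dirset_LD_subset dirset_subset_dirset_LD by (rule equalityI)

section \<open>Bi-Lipschitz germs with semiline-(SSP)\<close>

locale bilipschitz_SSP_germ =
  fixes h :: "real ^ 'n \<Rightarrow> real ^ 'n" and U :: "(real ^ 'n) set" and K1 K2 :: real
  assumes open_U: "open U" and zero_in_U: "0 \<in> U" and h_zero: "h 0 = 0"
    and bilipschitz: "bilipschitz_on U K1 K2 h"
    and SSP: "semiline_SSP U h"
begin

lemma K_pos: "0 < K1" "K1 \<le> K2" "0 < K2"
  using bilipschitz unfolding bilipschitz_on_def by auto

lemma norm_h_diff_bounds:
  assumes "x \<in> U" "y \<in> U"
  shows "K1 * norm (x - y) \<le> norm (h x - h y)" "norm (h x - h y) \<le> K2 * norm (x - y)"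
  using bilipschitz assms unfolding bilipschitz_on_def by auto

lemma norm_h_bounds:
  assumes "x \<in> U"
  shows "K1 * norm x \<le> norm (h x)" "norm (h x) \<le> K2 * norm x"
  using norm_h_diff_bounds[OF assms zero_in_U] h_zero by auto

lemma h_nonzero:
  assumes "x \<in> U" "x \<noteq> 0"
  shows "h x \<noteq> 0"
proof -
  have "0 < K1 * norm x"
    using K_pos assms(2) by simp
  then show ?thesis
    using norm_h_bounds(1)[OF assms(1)] by auto
qed

lemma continuous_on_h: "continuous_on U h"
proof (rule lipschitz_on_continuous_on)
  show "lipschitz_on K2 U h"
    using norm_h_diff_bounds(2) K_pos by (intro lipschitz_onI) (simp_all add: dist_norm)
qed

lemma tendsto_h_zero:
  assumes "\<And>i. x i \<in> U" "x \<longlonglongrightarrow> 0"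
  shows "(\<lambda>i. h (x i)) \<longlonglongrightarrow> 0"
proof (rule Lim_null_comparison)
  show "\<forall>\<^sub>F i in sequentially. norm (h (x i)) \<le> K2 * norm (x i)"
    by (intro always_eventually allI norm_h_bounds(2) assms(1))
  show "(\<lambda>i. K2 * norm (x i)) \<longlonglongrightarrow> 0"
    using assms(2) by (intro tendsto_mult_right_zero tendsto_norm_zero)
qed

lemma ball_subset_U:
  obtains \<delta> where "0 < \<delta>" "\<And>x. norm x < \<delta> \<Longrightarrow> x \<in> U"
proof -
  obtain \<delta> where "0 < \<delta>" "ball 0 \<delta> \<subseteq> U"
    using open_U zero_in_U open_contains_ball by blast
  then show thesis
    using that mem_ball_0 by blast
qed

definition image_dir :: "real ^ 'n \<Rightarrow> real ^ 'n" where
  "image_dir x = h x /\<^sub>R norm (h x)"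

lemma norm_image_dir: "x \<in> U \<Longrightarrow> x \<noteq> 0 \<Longrightarrow> norm (image_dir x) = 1"
  using h_nonzero by (simp add: image_dir_def)

lemma norm_image_dir_diff_le:
  assumes "x \<in> U" "y \<in> U" "y \<noteq> 0"
  shows "norm (image_dir x - image_dir y) \<le> 2 * K2 / K1 * norm (x - y) / norm y"
proof -
  have "norm (image_dir x - image_dir y) \<le> 2 * norm (h x - h y) / norm (h y)"
    unfolding image_dir_def using h_nonzero[OF assms(2,3)] by (rule norm_normalize_diff_le)
  also have "\<dots> \<le> 2 * (K2 * norm (x - y)) / (K1 * norm y)"
  proof (rule frac_le)
    show "0 \<le> 2 * (K2 * norm (x - y))" "0 < K1 * norm y"
      using K_pos assms(3) by simp_all
    show "2 * norm (h x - h y) \<le> 2 * (K2 * norm (x - y))"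
      using norm_h_diff_bounds(2)[OF assms(1,2)] by simp
    show "K1 * norm y \<le> norm (h y)"
      using norm_h_bounds(1)[OF assms(2)] .
  qed
  also have "\<dots> = 2 * K2 / K1 * norm (x - y) / norm y"
    by simp
  finally show ?thesis .
qed

lemma norm_image_dir_diff_ray_le:
  assumes "x \<in> U" "x \<noteq> 0" "norm a = 1" "norm x *\<^sub>R a \<in> U"
  shows "norm (image_dir x - image_dir (norm x *\<^sub>R a)) \<le> 2 * K2 / K1 * norm (x /\<^sub>R norm x - a)"
proof -
  have "x - norm x *\<^sub>R a = norm x *\<^sub>R (x /\<^sub>R norm x - a)"
    using assms(2) by (simp add: scaleR_diff_right)
  then have ratio: "norm (x - norm x *\<^sub>R a) / norm (norm x *\<^sub>R a) = norm (x /\<^sub>R norm x - a)"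
    using assms(2,3) by simp
  have "norm (image_dir x - image_dir (norm x *\<^sub>R a))
      \<le> 2 * K2 / K1 * norm (x - norm x *\<^sub>R a) / norm (norm x *\<^sub>R a)"
    using assms by (intro norm_image_dir_diff_le) auto
  then show ?thesis
    by (simp only: ratio times_divide_eq_right[symmetric])
qed

lemma image_dir_ray_limit_in_dirset:
  assumes a: "norm a = 1" and T: "\<And>n. 0 < T n" "\<And>n. T n *\<^sub>R a \<in> U" "T \<longlonglongrightarrow> 0"
    and lim: "(\<lambda>n. image_dir (T n *\<^sub>R a)) \<longlonglongrightarrow> c"
  shows "c \<in> dirset (h ` (semiline a \<inter> U))"
proof (rule dirsetI)
  show "h (T n *\<^sub>R a) \<in> h ` (semiline a \<inter> U) - {0}" for n
  proof -
    have "T n *\<^sub>R a \<in> semiline a"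
      unfolding semiline_def using T(1)[of n] less_imp_le by blast
    moreover have "T n *\<^sub>R a \<noteq> 0"
      using T(1)[of n] a by auto
    ultimately show ?thesis
      using T(2)[of n] h_nonzero by auto
  qed
  show "(\<lambda>n. h (T n *\<^sub>R a)) \<longlonglongrightarrow> 0"
    using T(2) tendsto_scaleR[OF T(3) tendsto_const, of a] by (intro tendsto_h_zero) simp_all
  show "(\<lambda>n. h (T n *\<^sub>R a) /\<^sub>R norm (h (T n *\<^sub>R a))) \<longlonglongrightarrow> c"
    using lim by (simp add: image_dir_def)
qed

lemma image_dir_ray_tendsto_hbar:
  assumes a: "norm a = 1"
  shows "((\<lambda>t. image_dir (t *\<^sub>R a)) \<longlongrightarrow> hbar h a) (at_right 0)"
    and "norm (hbar h a) = 1"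
proof -
  obtain \<delta> where \<delta>: "0 < \<delta>" "\<And>x. norm x < \<delta> \<Longrightarrow> x \<in> U"
    using ball_subset_U by blast
  obtain b where b: "dirset (h ` (semiline a \<inter> U)) = {b}"
    using SSP a unfolding semiline_SSP_def by blast
  have "((\<lambda>t. image_dir (t *\<^sub>R a)) \<longlongrightarrow> b) (at_right 0)"
  proof (rule tendsto_at_right_sequentially[OF \<delta>(1)])
    fix T assume T: "\<And>n. 0 < T n" "\<And>n. T n < \<delta>" "T \<longlonglongrightarrow> 0"
    have TU: "T n *\<^sub>R a \<in> U" for n
      using \<delta>(2) T(1,2)[of n] a by auto
    show "(\<lambda>n. image_dir (T n *\<^sub>R a)) \<longlonglongrightarrow> b"
    proof (rule tendsto_if_compact_unique_subseq_limit[OF compact_sphere])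
      show "image_dir (T n *\<^sub>R a) \<in> sphere 0 1" for n
      proof -
        have nonzero: "T n *\<^sub>R a \<noteq> 0"
          using T(1)[of n] a by auto
        show ?thesis
          using norm_image_dir[OF TU[of n] nonzero] by simp
      qed
      fix r c assume r: "strict_mono r" "((\<lambda>n. image_dir (T n *\<^sub>R a)) \<circ> r) \<longlonglongrightarrow> c"
      have "c \<in> dirset (h ` (semiline a \<inter> U))"
        using LIMSEQ_subseq_LIMSEQ[OF T(3) r(1)] r(2) T(1) TU
        by (intro image_dir_ray_limit_in_dirset[OF a, where T = "\<lambda>n. T (r n)"]) (simp_all add: o_def)
      then show "c = b"
        using b by simp
    qed
  qed
  moreover from this have "hbar h a = b"
    unfolding hbar_def image_dir_def by (intro tendsto_Lim) simp_all
  ultimately show "((\<lambda>t. image_dir (t *\<^sub>R a)) \<longlongrightarrow> hbar h a) (at_right 0)"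
    and "norm (hbar h a) = 1"
    using norm_dirset[of b] b by auto
qed

lemma image_dir_tendsto_hbar:
  assumes x: "\<And>i. x i \<in> U - {0}" "x \<longlonglongrightarrow> 0" "(\<lambda>i. x i /\<^sub>R norm (x i)) \<longlonglongrightarrow> a"
  shows "(\<lambda>i. image_dir (x i)) \<longlonglongrightarrow> hbar h a"
proof -
  have a: "norm a = 1"
    by (rule norm_eq_1_if_tendsto_normalized[OF _ x(3)]) (use x(1) in auto)
  obtain \<delta> where \<delta>: "0 < \<delta>" "\<And>x. norm x < \<delta> \<Longrightarrow> x \<in> U"
    using ball_subset_U by blast
  have norm_zero: "(\<lambda>i. norm (x i)) \<longlonglongrightarrow> 0"
    using x(2) by (rule tendsto_norm_zero)
  then have "filterlim (\<lambda>i. norm (x i)) (at_right 0) sequentially"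
    using x(1) by (intro tendsto_imp_filterlim_at_right) auto
  then have ray: "(\<lambda>i. image_dir (norm (x i) *\<^sub>R a)) \<longlonglongrightarrow> hbar h a"
    by (rule filterlim_compose[OF image_dir_ray_tendsto_hbar(1)[OF a]])
  have "(\<lambda>i. image_dir (x i) - image_dir (norm (x i) *\<^sub>R a)) \<longlonglongrightarrow> 0"
  proof (rule Lim_null_comparison)
    have "(\<lambda>i. x i /\<^sub>R norm (x i) - a) \<longlonglongrightarrow> 0"
      using x(3) by (rule LIM_zero)
    then show "(\<lambda>i. 2 * K2 / K1 * norm (x i /\<^sub>R norm (x i) - a)) \<longlonglongrightarrow> 0"
      by (intro tendsto_mult_right_zero tendsto_norm_zero)
    show "\<forall>\<^sub>F i in sequentially.
        norm (image_dir (x i) - image_dir (norm (x i) *\<^sub>R a)) \<le> 2 * K2 / K1 * norm (x i /\<^sub>R norm (x i) - a)"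
      using order_tendstoD(2)[OF norm_zero \<delta>(1)]
      by (rule eventually_mono) (intro norm_image_dir_diff_ray_le, use x(1) a \<delta>(2) in auto)
  qed
  from tendsto_add[OF this ray] show ?thesis
    by simp
qed

lemma dirset_image_subset: "dirset (h ` (A \<inter> U)) \<subseteq> hbar h ` dirset A"
proof
  fix b assume "b \<in> dirset (h ` (A \<inter> U))"
  then obtain z where z: "\<And>i. z i \<in> h ` (A \<inter> U) - {0}" "z \<longlonglongrightarrow> 0"
    "(\<lambda>i. z i /\<^sub>R norm (z i)) \<longlonglongrightarrow> b"
    by (metis dirsetE)
  have "\<forall>i. \<exists>y. y \<in> A \<inter> U \<and> z i = h y"
    using z(1) by blast
  from choice[OF this] obtain x where x: "\<And>i. x i \<in> A \<inter> U" "\<And>i. z i = h (x i)"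
    by blast
  have x_nonzero: "x i \<noteq> 0" for i
    using z(1)[of i] x h_zero by auto
  have "x \<longlonglongrightarrow> 0"
  proof (rule Lim_null_comparison)
    show "\<forall>\<^sub>F i in sequentially. norm (x i) \<le> norm (z i) / K1"
      using norm_h_bounds(1) x K_pos by (intro always_eventually allI) (simp add: field_simps)
    show "(\<lambda>i. norm (z i) / K1) \<longlonglongrightarrow> 0"
      using z(2) by (intro tendsto_divide_zero tendsto_norm_zero)
  qed
  have "\<forall>i. x i /\<^sub>R norm (x i) \<in> sphere 0 1"
    using x_nonzero by simp
  with compact_imp_seq_compact[OF compact_sphere]
  obtain a and r :: "nat \<Rightarrow> nat" where
    r: "a \<in> sphere 0 1" "strict_mono r" "((\<lambda>i. x i /\<^sub>R norm (x i)) \<circ> r) \<longlonglongrightarrow> a"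
    by (rule seq_compactE)
  have xr: "(\<lambda>i. x (r i)) \<longlonglongrightarrow> 0" "(\<lambda>i. x (r i) /\<^sub>R norm (x (r i))) \<longlonglongrightarrow> a"
    using LIMSEQ_subseq_LIMSEQ[OF \<open>x \<longlonglongrightarrow> 0\<close> r(2)] r(3) by (simp_all add: o_def)
  have "a \<in> dirset A"
    using xr x x_nonzero by (intro dirsetI) auto
  moreover have "b = hbar h a"
  proof (rule LIMSEQ_unique)
    show "(\<lambda>i. image_dir (x (r i))) \<longlonglongrightarrow> b"
      using LIMSEQ_subseq_LIMSEQ[OF z(3) r(2)] by (simp add: o_def image_dir_def x(2))
    show "(\<lambda>i. image_dir (x (r i))) \<longlonglongrightarrow> hbar h a"
      using xr x x_nonzero by (intro image_dir_tendsto_hbar) auto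
  qed
  ultimately show "b \<in> hbar h ` dirset A"
    by blast
qed

lemma hbar_dirset_subset: "hbar h ` dirset A \<subseteq> dirset (h ` (A \<inter> U))"
proof
  fix b assume "b \<in> hbar h ` dirset A"
  then obtain a where b: "b = hbar h a" and "a \<in> dirset A"
    by blast
  then obtain x where x: "\<And>i. x i \<in> A - {0}" "x \<longlonglongrightarrow> 0" "(\<lambda>i. x i /\<^sub>R norm (x i)) \<longlonglongrightarrow> a"
    by (metis dirsetE)
  obtain N where N: "\<And>i. N \<le> i \<Longrightarrow> x i \<in> U"
    using topological_tendstoD[OF x(2) open_U zero_in_U] unfolding eventually_sequentially by blast
  define y where "y = (\<lambda>i. x (i + N))"
  have y: "\<And>i. y i \<in> A \<inter> U - {0}" "y \<longlonglongrightarrow> 0" "(\<lambda>i. y i /\<^sub>R norm (y i)) \<longlonglongrightarrow> a"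
    using x N LIMSEQ_ignore_initial_segment[OF x(2), of N] LIMSEQ_ignore_initial_segment[OF x(3), of N]
    by (auto simp: y_def)
  show "b \<in> dirset (h ` (A \<inter> U))"
  proof (rule dirsetI)
    show "h (y i) \<in> h ` (A \<inter> U) - {0}" for i
      using y(1)[of i] h_nonzero by auto
    show "(\<lambda>i. h (y i)) \<longlonglongrightarrow> 0"
      using y(1,2) by (intro tendsto_h_zero) auto
    show "(\<lambda>i. h (y i) /\<^sub>R norm (h (y i))) \<longlonglongrightarrow> b"
      using image_dir_tendsto_hbar[of y a] y b by (auto simp: image_dir_def)
  qed
qed

lemma dirset_image_eq: "dirset (h ` (A \<inter> U)) = hbar h ` dirset A"
  using dirset_image_subset hbar_dirset_subset by (rule equalityI)

lemma norm_hbar_diff_le: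
  assumes a: "norm a = 1" and b: "norm b = 1"
  shows "norm (hbar h a - hbar h b) \<le> 2 * K2 / K1 * norm (a - b)"
proof (rule tendsto_upperbound)
  show "((\<lambda>t. norm (image_dir (t *\<^sub>R a) - image_dir (t *\<^sub>R b))) \<longlongrightarrow> norm (hbar h a - hbar h b))
      (at_right 0)"
    by (intro tendsto_norm tendsto_diff image_dir_ray_tendsto_hbar(1) a b)
  obtain \<delta> where \<delta>: "0 < \<delta>" "\<And>x. norm x < \<delta> \<Longrightarrow> x \<in> U"
    using ball_subset_U by blast
  show "\<forall>\<^sub>F t in at_right 0. norm (image_dir (t *\<^sub>R a) - image_dir (t *\<^sub>R b)) \<le> 2 * K2 / K1 * norm (a - b)"
    unfolding eventually_at_right_field
  proof (intro exI[of _ \<delta>] conjI allI impI)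
    show "0 < \<delta>"
      by (rule \<delta>(1))
    fix t :: real assume t: "0 < t" "t < \<delta>"
    have ratio: "norm (t *\<^sub>R a - t *\<^sub>R b) / norm (t *\<^sub>R b) = norm (a - b)"
      using t b by (simp flip: scaleR_diff_right)
    have "t *\<^sub>R a \<in> U" "t *\<^sub>R b \<in> U" "t *\<^sub>R b \<noteq> 0"
      using \<delta>(2) t a b by auto
    then have "norm (image_dir (t *\<^sub>R a) - image_dir (t *\<^sub>R b))
        \<le> 2 * K2 / K1 * norm (t *\<^sub>R a - t *\<^sub>R b) / norm (t *\<^sub>R b)"
      by (rule norm_image_dir_diff_le)
    then show "norm (image_dir (t *\<^sub>R a) - image_dir (t *\<^sub>R b)) \<le> 2 * K2 / K1 * norm (a - b)"
      by (simp only: ratio times_divide_eq_right[symmetric])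
  qed
qed simp

lemma ray_point_with_norm:
  assumes a: "norm a = 1" and r: "0 < r"
    and segment: "\<And>s. 0 \<le> s \<Longrightarrow> s \<le> r / K1 \<Longrightarrow> s *\<^sub>R a \<in> U"
  obtains s where "0 < s" "s \<le> r / K1" "norm (h (s *\<^sub>R a)) = r"
proof -
  have "continuous_on {0 .. r / K1} (h \<circ> (\<lambda>s. s *\<^sub>R a))"
    using segment by (intro continuous_on_compose continuous_intros continuous_on_subset[OF continuous_on_h]) auto
  then have cont: "continuous_on {0 .. r / K1} (\<lambda>s. norm (h (s *\<^sub>R a)))"
    by (intro continuous_on_norm) (simp add: o_def)
  have "K1 * (r / K1) \<le> norm (h ((r / K1) *\<^sub>R a))"
    using norm_h_bounds(1)[OF segment[of "r / K1"]] a r K_pos by simp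
  then have "r \<le> norm (h ((r / K1) *\<^sub>R a))"
    using K_pos by simp
  then obtain s where s: "0 \<le> s" "s \<le> r / K1" "norm (h (s *\<^sub>R a)) = r"
    using IVT'[of "\<lambda>s. norm (h (s *\<^sub>R a))" 0 r "r / K1", OF _ _ _ cont] h_zero r K_pos by auto
  moreover have "s \<noteq> 0"
    using s(3) h_zero r by auto
  ultimately show thesis
    using that[of s] by simp
qed

lemma image_dir_angle_estimate:
  assumes a: "norm a = 1" and b: "norm b = 1" and st: "0 \<le> s" "0 < t"
    and U: "s *\<^sub>R a \<in> U" "t *\<^sub>R b \<in> U" and same_norm: "norm (h (s *\<^sub>R a)) = norm (h (t *\<^sub>R b))"
  shows "K1 / (2 * K2) * norm (a - b) \<le> norm (image_dir (s *\<^sub>R a) - image_dir (t *\<^sub>R b))"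
proof -
  have "t *\<^sub>R b \<noteq> 0"
    using st(2) b by auto
  define r where "r = norm (h (t *\<^sub>R b))"
  have r: "0 < r" "r \<le> K2 * t"
    using h_nonzero[OF U(2) \<open>t *\<^sub>R b \<noteq> 0\<close>] norm_h_bounds(2)[OF U(2)] b st by (auto simp: r_def)
  have hs: "h (s *\<^sub>R a) = r *\<^sub>R image_dir (s *\<^sub>R a)" "h (t *\<^sub>R b) = r *\<^sub>R image_dir (t *\<^sub>R b)"
    using same_norm r(1) by (simp_all add: image_dir_def r_def)
  have "t * (K1 * norm (a - b)) = K1 * (t * norm (a - b))"
    by simp
  also have "\<dots> \<le> K1 * (2 * norm (s *\<^sub>R a - t *\<^sub>R b))"
    using scaleR_norm_diff_le_twice[OF a b st(1)] st(2) K_pos by simp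
  also have "\<dots> \<le> 2 * norm (h (s *\<^sub>R a) - h (t *\<^sub>R b))"
    using norm_h_diff_bounds(1)[OF U] by simp
  also have "\<dots> = 2 * r * norm (image_dir (s *\<^sub>R a) - image_dir (t *\<^sub>R b))"
    using r(1) by (simp add: hs abs_of_pos flip: scaleR_diff_right)
  also have "\<dots> \<le> 2 * (K2 * t) * norm (image_dir (s *\<^sub>R a) - image_dir (t *\<^sub>R b))"
    using r(2) by (intro mult_right_mono) auto
  also have "\<dots> = t * (2 * K2 * norm (image_dir (s *\<^sub>R a) - image_dir (t *\<^sub>R b)))"
    by simp
  finally have "K1 * norm (a - b) \<le> 2 * K2 * norm (image_dir (s *\<^sub>R a) - image_dir (t *\<^sub>R b))"
    using st(2) by simp
  then show ?thesis
    using K_pos by (simp add: field_simps)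
qed

lemma image_dir_angle_lower_bound:
  assumes a: "norm a = 1" and b: "norm b = 1" and t: "0 < t"
    and small: "\<And>x. norm x \<le> K2 * t / K1 \<Longrightarrow> x \<in> U"
  obtains s where "0 < s" "s \<le> K2 * t / K1"
    "K1 / (2 * K2) * norm (a - b) \<le> norm (image_dir (s *\<^sub>R a) - image_dir (t *\<^sub>R b))"
proof -
  have "K1 * t \<le> K2 * t"
    using K_pos t by (intro mult_right_mono) auto
  then have "t \<le> K2 * t / K1"
    using K_pos by (simp add: pos_le_divide_eq ac_simps)
  then have tb: "t *\<^sub>R b \<in> U" "t *\<^sub>R b \<noteq> 0"
    using small[of "t *\<^sub>R b"] t b by auto
  define r where "r = norm (h (t *\<^sub>R b))"
  have r: "0 < r" "r \<le> K2 * t"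
    using h_nonzero[OF tb] norm_h_bounds(2)[OF tb(1)] b t by (auto simp: r_def)
  then have rK: "r / K1 \<le> K2 * t / K1"
    using K_pos by (intro divide_right_mono) auto
  have segment: "s *\<^sub>R a \<in> U" if "0 \<le> s" "s \<le> r / K1" for s
    using that rK a by (intro small) simp
  obtain s where s: "0 < s" "s \<le> r / K1" "norm (h (s *\<^sub>R a)) = r"
    by (rule ray_point_with_norm[OF a r(1) segment])
  show thesis
  proof (rule that)
    show "0 < s" "s \<le> K2 * t / K1"
      using s(1,2) rK by simp_all
    show "K1 / (2 * K2) * norm (a - b) \<le> norm (image_dir (s *\<^sub>R a) - image_dir (t *\<^sub>R b))"
      using s(1,2) by (intro image_dir_angle_estimate[OF a b _ t segment tb(1)]) (simp_all add: s(3) r_def)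
  qed
qed

lemma matching_ray_points_exist:
  assumes a: "norm a = 1" and b: "norm b = 1"
  obtains S where "\<forall>\<^sub>F t in at_right 0. 0 < S t \<and> S t \<le> K2 * t / K1 \<and>
      K1 / (2 * K2) * norm (a - b) \<le> norm (image_dir (S t *\<^sub>R a) - image_dir (t *\<^sub>R b))"
proof -
  obtain \<delta> where \<delta>: "0 < \<delta>" "\<And>x. norm x < \<delta> \<Longrightarrow> x \<in> U"
    using ball_subset_U by blast
  define \<tau> where "\<tau> = K1 * \<delta> / K2"
  have "\<forall>t. \<exists>s. 0 < t \<and> t < \<tau> \<longrightarrow> 0 < s \<and> s \<le> K2 * t / K1 \<and>
      K1 / (2 * K2) * norm (a - b) \<le> norm (image_dir (s *\<^sub>R a) - image_dir (t *\<^sub>R b))"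
  proof
    fix t
    show "\<exists>s. 0 < t \<and> t < \<tau> \<longrightarrow> 0 < s \<and> s \<le> K2 * t / K1 \<and>
      K1 / (2 * K2) * norm (a - b) \<le> norm (image_dir (s *\<^sub>R a) - image_dir (t *\<^sub>R b))"
    proof (cases "0 < t \<and> t < \<tau>")
      case True
      then have "K2 * t / K1 < \<delta>"
        using K_pos by (simp add: \<tau>_def field_simps)
      then have small: "x \<in> U" if "norm x \<le> K2 * t / K1" for x
        using that by (intro \<delta>(2)) linarith
      from True have "0 < t"
        by simp
      then obtain s where "0 < s" "s \<le> K2 * t / K1"
        "K1 / (2 * K2) * norm (a - b) \<le> norm (image_dir (s *\<^sub>R a) - image_dir (t *\<^sub>R b))"
        by (rule image_dir_angle_lower_bound[OF a b _ small])
      then show ?thesis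
        by blast
    qed auto
  qed
  from choice[OF this] obtain S where S: "\<And>t. 0 < t \<Longrightarrow> t < \<tau> \<Longrightarrow> 0 < S t \<and> S t \<le> K2 * t / K1 \<and>
      K1 / (2 * K2) * norm (a - b) \<le> norm (image_dir (S t *\<^sub>R a) - image_dir (t *\<^sub>R b))"
    by blast
  have "\<forall>\<^sub>F t in at_right 0. 0 < t \<and> t < \<tau>"
    unfolding eventually_at_right_field using \<delta>(1) K_pos by (intro exI[of _ \<tau>]) (simp add: \<tau>_def)
  then show thesis
    by (rule that[OF eventually_mono]) (use S in blast)
qed

lemma norm_hbar_diff_ge:
  assumes a: "norm a = 1" and b: "norm b = 1"
  shows "K1 / (2 * K2) * norm (a - b) \<le> norm (hbar h a - hbar h b)"
proof -
  obtain S where S: "\<forall>\<^sub>F t in at_right 0. 0 < S t \<and> S t \<le> K2 * t / K1 \<and>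
      K1 / (2 * K2) * norm (a - b) \<le> norm (image_dir (S t *\<^sub>R a) - image_dir (t *\<^sub>R b))"
    using matching_ray_points_exist[OF a b] by blast
  have "((\<lambda>t. K2 * t / K1) \<longlongrightarrow> K2 * 0 / K1) (at_right 0)"
    using K_pos by (intro tendsto_intros) simp
  then have "filterlim S (at_right 0) (at_right 0)"
    using S by (intro filterlim_at_right_0_if_squeezed[where g = "\<lambda>t. K2 * t / K1"])
      (simp_all add: eventually_mono)
  then have "((\<lambda>t. image_dir (S t *\<^sub>R a)) \<longlongrightarrow> hbar h a) (at_right 0)"
    by (rule filterlim_compose[OF image_dir_ray_tendsto_hbar(1)[OF a]])
  then have "((\<lambda>t. norm (image_dir (S t *\<^sub>R a) - image_dir (t *\<^sub>R b))) \<longlongrightarrow> norm (hbar h a - hbar h b))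
      (at_right 0)"
    by (intro tendsto_norm tendsto_diff image_dir_ray_tendsto_hbar(1)[OF b])
  moreover have "\<forall>\<^sub>F t in at_right 0.
      K1 / (2 * K2) * norm (a - b) \<le> norm (image_dir (S t *\<^sub>R a) - image_dir (t *\<^sub>R b))"
    using S by (rule eventually_mono) blast
  ultimately show ?thesis
    by (rule tendsto_lowerbound) simp
qed

lemma hbar_extends_to_bilipschitz_homeomorphism:
  "\<exists>H G L1 L2. homeomorphism UNIV UNIV H G \<and> bilipschitz_on UNIV L1 L2 H \<and>
     (\<forall>a. norm a = 1 \<longrightarrow> H a = hbar h a)"
proof -
  have "0 \<le> 2 * K2 / K1" "0 < K1 / (2 * K2)"
    using K_pos by simp_all
  with radial_extension_bilipschitz[OF image_dir_ray_tendsto_hbar(2) norm_hbar_diff_le norm_hbar_diff_ge]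
  obtain L1 L2 where bil: "bilipschitz_on UNIV L1 L2 (radial_extension (hbar h))"
    by blast
  then obtain G where "homeomorphism UNIV UNIV (radial_extension (hbar h)) G"
    by (rule homeomorphism_UNIV_if_bilipschitz)
  then show ?thesis
    using bil radial_extension_unit by blast
qed

end

text \<open>Without \<open>0 \<in> closure A\<close> all the direction sets involved are empty.\<close>

theorem theorem2p25:
  fixes h :: "real ^ 'n \<Rightarrow> real ^ 'n" and U :: "(real ^ 'n) set" and K1 K2 :: real
  assumes "open U" and "0 \<in> U" and "h 0 = 0"
    and "bilipschitz_on U K1 K2 h"
    and "semiline_SSP U h"
  shows "(\<exists>H G L1 L2. homeomorphism UNIV UNIV H G \<and> bilipschitz_on UNIV L1 L2 H \<and>
            (\<forall>a. norm a = 1 \<longrightarrow> H a = hbar h a))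
       \<and> (\<forall>A :: (real ^ 'n) set. 0 \<in> closure A \<longrightarrow>
            hbar h ` dirset A = dirset (h ` (LD A \<inter> U)) \<and>
            dirset (h ` (LD A \<inter> U)) = dirset (h ` (A \<inter> U)))"
proof -
  interpret bilipschitz_SSP_germ h U K1 K2
    using assms by unfold_locales
  show ?thesis
    using hbar_extends_to_bilipschitz_homeomorphism by (simp add: dirset_image_eq dirset_LD)
qed

end
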